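(* For every integer $n\ge1$, \[ \sum_{\substack{m+k=n\\ m\ge1,\ k\ge0}}q_\psi(m)\,\Omega_m(k)=\begin{cases}-\omega(n)&\text{if } n \text{ is odd},\\ -\omega(n)+\omega(n/2)&\text{if } n\text{ is even}.\end{cases} \]
   Context: $q_\psi(n)$ is the number of partitions of $n$ into distinct parts whose parts have greatest common divisor $1$. $\omega:\mathbb{Z}\to\mathbb{Z}$ is defined by $\omega(0)=1$; $\omega(m)=(-1)^j$ if $m=\frac{3j^2\pm j}{2}$ for some integer $j\ge1$; $\omega(m)=0$ otherwise (in particular for $m<0$). For $m\ge1$ and integer $k$, $\Omega_m(k)=\sum_{j\ge0}\omega(k-jm)=\omega(k)+\omega(k-m)+\omega(k-2m)+\cdots$. *)

theory Defs
  imports Main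
begin

text \<open>Partitions of n into distinct parts = finite sets of positive integers with sum n.
  q_psi n counts those whose parts have gcd 1.\<close>
definition q_psi :: "nat \<Rightarrow> nat" where
  "q_psi n = card {S :: nat set. S \<subseteq> {1..n} \<and> \<Sum>S = n \<and> Gcd S = 1}"

definition omega :: "int \<Rightarrow> int" where
  "omega m = (if m = 0 then 1
     else if (\<exists>j::int. j \<ge> 1 \<and> (2 * m = 3 * j^2 + j \<or> 2 * m = 3 * j^2 - j))
     then (-1) ^ nat (THE j::int. j \<ge> 1 \<and> (2 * m = 3 * j^2 + j \<or> 2 * m = 3 * j^2 - j))
     else 0)"

text \<open>Omega m k = sum over j \<ge> 0 of omega (k - j m); only terms with k - j m \<ge> 0 can be nonzero.\<close>
definition Omega :: "nat \<Rightarrow> int \<Rightarrow> int" where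
  "Omega m k = (\<Sum>j \<in> {j::nat. int j * int m \<le> k}. omega (k - int j * int m))"

end

theory Submission
  imports Defs "HOL-Computational_Algebra.Formal_Power_Series"
begin

text \<open>In formal power series, \<open>\<Prod>(1 + x\<^sup>i)\<close> counts partitions into distinct parts and
  \<open>\<Prod>(1 - x\<^sup>i)\<close> has the coefficients \<open>\<omega>\<close> by Euler's pentagonal theorem, which follows from
  Shanks' finite identity. Grouping the partitions of \<open>t\<close> into distinct parts by the gcd \<open>t/m\<close>
  of their parts gives \<open>\<Sum>\<^bsub>m dvd t\<^esub> q\<^sub>\<psi>(m)\<close> of them, and the left-hand side of the theorem is
  exactly the coefficient of \<open>x\<^sup>n\<close> in \<open>(\<Prod>(1 + x\<^sup>i) - 1) \<Prod>(1 - x\<^sup>i)\<close>. Since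
  \<open>(1 + x\<^sup>i)(1 - x\<^sup>i) = 1 - x\<^sup>2\<^sup>i\<close>, this coefficient is \<open>\<omega>(n/2) - \<omega>(n)\<close>, the first term
  being present only for even \<open>n\<close>.\<close>

unbundle fps_syntax

section \<open>Shanks' finite pentagonal identity\<close>

definition triangular :: "nat \<Rightarrow> nat" where
  "triangular k = k * (k + 1) div 2"

definition pent_minus :: "nat \<Rightarrow> nat" where
  "pent_minus j = j * (3 * j - 1) div 2"

definition pent_plus :: "nat \<Rightarrow> nat" where
  "pent_plus j = j * (3 * j + 1) div 2"

definition shanks_term :: "'a::comm_ring_1 \<Rightarrow> nat \<Rightarrow> nat \<Rightarrow> 'a" where
  "shanks_term q n k = (-1)^k * q^(n * k + triangular k) * (\<Prod>i\<in>{Suc k..n}. 1 - q^i)"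

definition pentagonal_partial_sum :: "'a::comm_ring_1 \<Rightarrow> nat \<Rightarrow> 'a" where
  "pentagonal_partial_sum q n = 1 + (\<Sum>j=1..n. (-1)^j * (q^pent_minus j + q^pent_plus j))"

lemma triangular_0 [simp]: "triangular 0 = 0"
  by (simp add: triangular_def)

lemma triangular_Suc: "triangular (Suc k) = triangular k + Suc k"
  unfolding triangular_def by (induction k) auto

lemma two_triangular: "2 * triangular k = k * (k + 1)"
  unfolding triangular_def by auto

lemma two_pent_minus: "2 * pent_minus j = j * (3 * j - 1)"
proof -
  have "even (j * (3 * j - 1))" by (cases "even j") auto
  thus ?thesis unfolding pent_minus_def by simp
qed

lemma two_pent_plus: "2 * pent_plus j = j * (3 * j + 1)"
proof -
  have "even (j * (3 * j + 1))" by (cases "even j") auto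
  thus ?thesis unfolding pent_plus_def by simp
qed

lemma pent_minus_Suc: "pent_minus (Suc n) = n * n + 2 * n + 1 + triangular n"
  using two_pent_minus[of "Suc n"] two_triangular[of n] by (simp add: algebra_simps)

lemma pent_plus_Suc: "pent_plus (Suc n) = Suc n * Suc n + triangular (Suc n)"
  using two_pent_plus[of "Suc n"] two_triangular[of "Suc n"] by (simp add: algebra_simps)

lemma shanks_term_step:
  assumes "Suc k \<le> n"
  shows "(1 - q^Suc k) * shanks_term q n (Suc k) = - (q^(n + k + 1) * shanks_term q n k)"
proof -
  have split: "(\<Prod>i\<in>{Suc k..n}. 1 - q^i) = (1 - q^Suc k) * (\<Prod>i\<in>{Suc (Suc k)..n}. 1 - q^i)"
    using assms by (simp add: prod.atLeast_Suc_atMost)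
  show ?thesis
    unfolding shanks_term_def split triangular_Suc by (simp add: algebra_simps power_add)
qed

lemma shanks_term_Suc:
  assumes "k \<le> n"
  shows "shanks_term q (Suc n) k = q^k * (1 - q^Suc n) * shanks_term q n k"
proof -
  have split: "(\<Prod>i\<in>{Suc k..Suc n}. 1 - q^i) = (\<Prod>i\<in>{Suc k..n}. 1 - q^i) * (1 - q^Suc n)"
    using assms by (simp add: prod.nat_ivl_Suc')
  show ?thesis
    unfolding shanks_term_def split by (simp add: algebra_simps power_add)
qed

lemma sum_shanks_term_telescope:
  assumes "m \<le> n"
  shows "(\<Sum>k=0..m. shanks_term q n k * (q^k * (1 - q^Suc n) - 1))
    = - (q^(n + 1 + m) * shanks_term q n m)"
  using assms
proof (induction m)
  case 0
  then show ?case by (simp add: algebra_simps)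
next
  case (Suc m)
  have "shanks_term q n (Suc m) * (q^Suc m * (1 - q^Suc n) - 1) =
      - ((1 - q^Suc m) * shanks_term q n (Suc m)) - q^(n + 1 + Suc m) * shanks_term q n (Suc m)"
    by (simp add: algebra_simps power_add)
  also have "(1 - q^Suc m) * shanks_term q n (Suc m) = - (q^(n + m + 1) * shanks_term q n m)"
    using shanks_term_step Suc.prems by blast
  finally show ?case using Suc by (simp add: algebra_simps)
qed

theorem shanks_pentagonal_identity:
  "(\<Sum>k=0..n. shanks_term q n k) = pentagonal_partial_sum q n"
proof (induction n)
  case 0
  then show ?case by (simp add: pentagonal_partial_sum_def shanks_term_def)
next
  case (Suc n)
  have "(\<Sum>k=0..Suc n. shanks_term q (Suc n) k)
      = (\<Sum>k=0..n. q^k * (1 - q^Suc n) * shanks_term q n k) + shanks_term q (Suc n) (Suc n)"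
    by (simp add: shanks_term_Suc)
  also have "(\<Sum>k=0..n. q^k * (1 - q^Suc n) * shanks_term q n k)
      = (\<Sum>k=0..n. shanks_term q n k) + (\<Sum>k=0..n. shanks_term q n k * (q^k * (1 - q^Suc n) - 1))"
    by (simp add: sum.distrib[symmetric] algebra_simps)
  also have "(\<Sum>k=0..n. shanks_term q n k * (q^k * (1 - q^Suc n) - 1))
      = - (q^(n + 1 + n) * shanks_term q n n)"
    by (rule sum_shanks_term_telescope) simp
  also have "\<dots> = (-1)^Suc n * q^pent_minus (Suc n)"
    by (simp add: shanks_term_def pent_minus_Suc power_add algebra_simps mult_2_right)
  also have "shanks_term q (Suc n) (Suc n) = (-1)^Suc n * q^pent_plus (Suc n)"
    by (simp add: shanks_term_def pent_plus_Suc)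
  finally show ?case using Suc by (simp add: pentagonal_partial_sum_def algebra_simps)
qed

section \<open>Generalized pentagonal numbers and \<open>omega\<close>\<close>

lemma two_pent_minus_int: "2 * int (pent_minus j) = 3 * int j ^ 2 - int j"
proof (cases "j = 0")
  case False
  have "int (2 * pent_minus j) = int j * (3 * int j - 1)"
    unfolding two_pent_minus using False by (simp add: of_nat_diff)
  thus ?thesis by (simp add: algebra_simps power2_eq_square)
qed (simp add: pent_minus_def)

lemma two_pent_plus_int: "2 * int (pent_plus j) = 3 * int j ^ 2 + int j"
proof -
  have "int (2 * pent_plus j) = int j * (3 * int j + 1)"
    unfolding two_pent_plus by (simp add: ring_distribs)
  thus ?thesis by (simp add: algebra_simps power2_eq_square)
qed

lemma pent_minus_ge: "pent_minus j \<ge> j"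
proof -
  have "j * (3 * j - 1) \<ge> j * 2" if "j \<ge> 1" using that by simp
  hence "2 * pent_minus j \<ge> 2 * j" unfolding two_pent_minus by (cases "j = 0") auto
  thus ?thesis by simp
qed

lemma pent_plus_ge: "pent_plus j \<ge> j"
proof -
  have "2 * pent_plus j \<ge> 2 * j" unfolding two_pent_plus by simp
  thus ?thesis by simp
qed

lemma pent_minus_less_pent_plus: "j \<ge> 1 \<Longrightarrow> pent_minus j < pent_plus j"
  using two_pent_minus_int[of j] two_pent_plus_int[of j] by simp

text \<open>The numbers \<open>(3j\<^sup>2 \<plusminus> j)/2\<close> are the values of the injective map \<open>j \<mapsto> (3j\<^sup>2 - j)/2\<close>
  on \<open>\<int>\<close>; this makes the \<open>THE\<close> in the definition of \<open>omega\<close> well defined.\<close>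
lemma generalized_pentagonal_unique:
  fixes j k m :: int
  assumes "j \<ge> 1" "k \<ge> 1"
    and "2 * m = 3 * j^2 + j \<or> 2 * m = 3 * j^2 - j"
    and "2 * m = 3 * k^2 + k \<or> 2 * m = 3 * k^2 - k"
  shows "j = k"
proof -
  have "j + k \<noteq> 0" "3 * j + 3 * k + 1 \<noteq> 0" "3 * j + 3 * k - 1 \<noteq> 0"
    using assms(1,2) by simp_all
  moreover have "3 * (j - k) + 1 \<noteq> 0" "3 * (j - k) - 1 \<noteq> 0" by presburger+
  moreover have "(j - k) * (3 * j + 3 * k + 1) = 0" if "3 * j^2 + j = 3 * k^2 + k"
    using that by (simp add: algebra_simps power2_eq_square)
  moreover have "(j - k) * (3 * j + 3 * k - 1) = 0" if "3 * j^2 - j = 3 * k^2 - k"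
    using that by (simp add: algebra_simps power2_eq_square)
  moreover have "(3 * (j - k) + 1) * (j + k) = 0" if "3 * j^2 + j = 3 * k^2 - k"
    using that by (simp add: algebra_simps power2_eq_square)
  moreover have "(3 * (j - k) - 1) * (j + k) = 0" if "3 * j^2 - j = 3 * k^2 + k"
    using that by (simp add: algebra_simps power2_eq_square)
  ultimately show ?thesis using assms(3,4) by (metis eq_iff_diff_eq_0 mult_eq_0_iff)
qed

lemma pentagonal_index_unique:
  assumes "i \<ge> 1" "j \<ge> 1" "pent_minus i = m \<or> pent_plus i = m" "pent_minus j = m \<or> pent_plus j = m"
  shows "i = j"
proof -
  have "2 * int m = 3 * int i ^ 2 + int i \<or> 2 * int m = 3 * int i ^ 2 - int i"
    using assms(3) two_pent_minus_int[of i] two_pent_plus_int[of i] by auto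
  moreover have "2 * int m = 3 * int j ^ 2 + int j \<or> 2 * int m = 3 * int j ^ 2 - int j"
    using assms(4) two_pent_minus_int[of j] two_pent_plus_int[of j] by auto
  ultimately show ?thesis
    using generalized_pentagonal_unique[of "int i" "int j" "int m"] assms(1,2) by simp
qed

lemma omega_pentagonal:
  assumes "j \<ge> 1" "pent_minus j = m \<or> pent_plus j = m"
  shows "omega (int m) = (-1)^j"
proof -
  define P where "P = (\<lambda>j::int. j \<ge> 1 \<and> (2 * int m = 3 * j^2 + j \<or> 2 * int m = 3 * j^2 - j))"
  have Pj: "P (int j)"
    using assms two_pent_minus_int[of j] two_pent_plus_int[of j] unfolding P_def by auto
  moreover have "(THE j. P j) = int j"
  proof (rule the_equality[of P, OF Pj])
    show "k = int j" if "P k" for k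
      using that Pj generalized_pentagonal_unique[of k "int j" "int m"] unfolding P_def by blast
  qed
  moreover have "m \<noteq> 0" using assms pent_minus_ge[of j] pent_plus_ge[of j] by auto
  ultimately show ?thesis unfolding omega_def P_def[symmetric] by auto
qed

lemma omega_non_pentagonal:
  assumes "m \<noteq> 0" "\<And>j. j \<ge> 1 \<Longrightarrow> pent_minus j \<noteq> m \<and> pent_plus j \<noteq> m"
  shows "omega (int m) = 0"
proof -
  have "\<not> (2 * int m = 3 * j^2 + j \<or> 2 * int m = 3 * j^2 - j)" if "j \<ge> 1" for j :: int
  proof -
    have "pent_minus (nat j) \<noteq> m" "pent_plus (nat j) \<noteq> m" using assms(2)[of "nat j"] that by auto
    moreover have "int (nat j) = j" using that by simp
    ultimately show ?thesis
      using two_pent_minus_int[of "nat j"] two_pent_plus_int[of "nat j"] by auto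
  qed
  thus ?thesis using assms(1) unfolding omega_def by auto
qed

definition pentagonal_multiplicity :: "nat \<Rightarrow> nat \<Rightarrow> int" where
  "pentagonal_multiplicity m j = (if pent_minus j = m then 1 else 0) + (if pent_plus j = m then 1 else 0)"

lemma omega_eq_signed_pentagonal_count:
  assumes "m \<le> M"
  shows "omega (int m) = (if m = 0 then 1 else 0) + (\<Sum>j=1..M. (-1)^j * pentagonal_multiplicity m j)"
proof -
  have zero: "pentagonal_multiplicity m j = 0"
    if "j \<ge> 1" "\<not> (pent_minus j = m \<or> pent_plus j = m)" for j
    using that by (simp add: pentagonal_multiplicity_def)
  consider "m = 0" | "m \<noteq> 0" "\<exists>j\<ge>1. pent_minus j = m \<or> pent_plus j = m"
    | "m \<noteq> 0" "\<And>j. j \<ge> 1 \<Longrightarrow> pent_minus j \<noteq> m \<and> pent_plus j \<noteq> m"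
    by blast
  then show ?thesis
  proof cases
    case 1
    have "pentagonal_multiplicity m j = 0" if "j \<ge> 1" for j
      using 1 that pent_minus_ge[of j] pent_plus_ge[of j] by (simp add: pentagonal_multiplicity_def)
    then show ?thesis using 1 by (simp add: omega_def)
  next
    case 2
    then obtain j where j: "j \<ge> 1" "pent_minus j = m \<or> pent_plus j = m" by blast
    have "j \<in> {1..M}"
      using j pent_minus_ge[of j] pent_plus_ge[of j] assms by auto
    moreover have "pentagonal_multiplicity m j = 1"
      using j pent_minus_less_pent_plus[of j] by (auto simp: pentagonal_multiplicity_def)
    moreover have "pentagonal_multiplicity m i = 0" if "i \<in> {1..M} - {j}" for i
      using that zero pentagonal_index_unique[OF _ j(1) _ j(2), of i] by auto
    ultimately have "(\<Sum>i=1..M. (-1)^i * pentagonal_multiplicity m i) = (-1)^j"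
      by (simp add: sum.remove)
    then show ?thesis using 2 omega_pentagonal[OF j] by simp
  next
    case 3
    then show ?thesis using zero omega_non_pentagonal by simp
  qed
qed

section \<open>Coefficients of the Euler product\<close>

definition euler_product :: "nat \<Rightarrow> nat \<Rightarrow> int fps" where
  "euler_product r N = (\<Prod>i=1..N. 1 - (fps_X ^ r) ^ i)"

lemma fps_neg1_power_mult_nth: "((-1::'a::comm_ring_1 fps)^j * f) $ m = (-1)^j * f $ m"
  by (induction j) (auto simp: algebra_simps)

lemma pentagonal_partial_sum_X_power_coeff:
  assumes "r \<ge> 1" "m \<le> N"
  shows "pentagonal_partial_sum (fps_X ^ r :: int fps) N $ m = (if r dvd m then omega (int (m div r)) else 0)"
proof -
  have nth: "pentagonal_partial_sum (fps_X ^ r :: int fps) N $ m = (if m = 0 then 1 else 0) +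
     (\<Sum>j=1..N. (-1)^j * ((if m = r * pent_minus j then 1 else 0) + (if m = r * pent_plus j then 1 else 0)))"
    unfolding pentagonal_partial_sum_def
    by (simp add: fps_sum_nth fps_neg1_power_mult_nth power_mult[symmetric])
  show ?thesis
  proof (cases "r dvd m")
    case True
    then obtain k where k: "m = r * k" by blast
    have "k \<le> r * k" using assms(1) by simp
    hence "k \<le> N" using assms(2) k by linarith
    moreover have "(m = r * x) = (x = k)" "(m = 0) = (k = 0)" "m div r = k" for x
      using k assms(1) by auto
    ultimately show ?thesis
      unfolding nth using omega_eq_signed_pentagonal_count[of k N] True
      by (simp add: pentagonal_multiplicity_def)
  next
    case False
    hence "m \<noteq> r * x" "m \<noteq> 0" for x by (metis dvd_triv_left, metis dvd_0_right)
    then show ?thesis unfolding nth using False by simp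
  qed
qed

lemma shanks_term_X_power_coeff_eq_0:
  assumes "r \<ge> 1" "m \<le> N" "k \<ge> 1"
  shows "shanks_term (fps_X ^ r :: int fps) N k $ m = 0"
proof -
  let ?e = "r * (N * k + triangular k)"
  have "shanks_term (fps_X ^ r :: int fps) N k
      = fps_X ^ ?e * ((-1)^k * (\<Prod>i\<in>{Suc k..N}. 1 - (fps_X ^ r) ^ i))"
    unfolding shanks_term_def by (simp add: power_mult ac_simps)
  moreover have "m < ?e"
  proof -
    have "triangular k \<ge> 1" using assms(3) by (cases k) (auto simp: triangular_Suc)
    moreover have "N \<le> N * k" "N * k + triangular k \<le> ?e" using assms(1,3) by simp_all
    ultimately show ?thesis using assms(2) by linarith
  qed
  ultimately show ?thesis by (simp add: fps_X_power_mult_nth)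
qed

text \<open>Only the term \<open>k = 0\<close> of Shanks' sum contributes to the first \<open>N\<close> coefficients.\<close>
lemma euler_product_coeff:
  assumes "r \<ge> 1" "m \<le> N"
  shows "euler_product r N $ m = (if r dvd m then omega (int (m div r)) else 0)"
proof -
  let ?q = "fps_X ^ r :: int fps"
  have "euler_product r N = shanks_term ?q N 0"
    by (simp add: euler_product_def shanks_term_def)
  also have "shanks_term ?q N 0 $ m = (\<Sum>k=0..N. shanks_term ?q N k) $ m"
    using shanks_term_X_power_coeff_eq_0[OF assms]
    by (simp add: fps_sum_nth sum.atLeast_Suc_atMost)
  also have "\<dots> = pentagonal_partial_sum ?q N $ m"
    by (simp add: shanks_pentagonal_identity)
  finally show ?thesis using pentagonal_partial_sum_X_power_coeff[OF assms] by simp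
qed

section \<open>Partitions into distinct parts\<close>

lemma subsets_with_sum_insert:
  assumes "finite A" "a \<notin> A"
  shows "{S. S \<subseteq> insert a A \<and> \<Sum>S = m} =
    {S. S \<subseteq> A \<and> \<Sum>S = m} \<union> insert a ` {S. S \<subseteq> A \<and> \<Sum>S + a = m}"
proof (intro equalityI subsetI)
  fix S assume S: "S \<in> {S. S \<subseteq> insert a A \<and> \<Sum>S = m}"
  have "finite S" using S assms(1) finite_subset by blast
  show "S \<in> {S. S \<subseteq> A \<and> \<Sum>S = m} \<union> insert a ` {S. S \<subseteq> A \<and> \<Sum>S + a = m}"
  proof (cases "a \<in> S")
    case True
    hence "S = insert a (S - {a})" "\<Sum>(S - {a}) + a = m" "S - {a} \<subseteq> A"
      using S \<open>finite S\<close> by (auto simp: sum.remove add.commute)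
    then show ?thesis by blast
  next
    case False
    then show ?thesis using S by auto
  qed
next
  fix S assume "S \<in> {S. S \<subseteq> A \<and> \<Sum>S = m} \<union> insert a ` {S. S \<subseteq> A \<and> \<Sum>S + a = m}"
  moreover have "\<Sum>(insert a T) = a + \<Sum>T" if "T \<subseteq> A" for T
    using that assms finite_subset by (subst sum.insert) auto
  ultimately show "S \<in> {S. S \<subseteq> insert a A \<and> \<Sum>S = m}" by (auto simp: add.commute)
qed

lemma card_subsets_with_sum_insert:
  assumes "finite A" "a \<notin> A"
  shows "card {S. S \<subseteq> insert a A \<and> \<Sum>S = m} =
    card {S. S \<subseteq> A \<and> \<Sum>S = m} + card {S. S \<subseteq> A \<and> \<Sum>S + a = m}"
proof -
  have fin: "finite {S. S \<subseteq> A \<and> P S}" for P using assms(1) by simp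
  have "inj_on (insert a) {S. S \<subseteq> A \<and> \<Sum>S + a = m}"
    using assms(2) by (auto intro!: inj_onI)
  moreover have "{S. S \<subseteq> A \<and> \<Sum>S = m} \<inter> insert a ` {S. S \<subseteq> A \<and> \<Sum>S + a = m} = {}"
    using assms(2) by auto
  ultimately show ?thesis
    unfolding subsets_with_sum_insert[OF assms] by (simp add: card_Un_disjoint card_image fin)
qed

lemma prod_one_plus_X_power_coeff:
  assumes "finite A" "0 \<notin> A"
  shows "(\<Prod>i\<in>A. 1 + fps_X ^ i :: int fps) $ m = int (card {S. S \<subseteq> A \<and> \<Sum>S = m})"
  using assms
proof (induction A arbitrary: m rule: finite_induct)
  case empty
  have "{S. S \<subseteq> {} \<and> \<Sum>S = m} = (if m = 0 then {{}} else {})" by auto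
  then show ?case by simp
next
  case (insert a A)
  let ?P = "\<Prod>i\<in>A. 1 + fps_X ^ i :: int fps"
  have "(\<Prod>i\<in>insert a A. 1 + fps_X ^ i :: int fps) $ m = ?P $ m + (fps_X ^ a * ?P) $ m"
    using insert by (simp add: algebra_simps)
  also have "(fps_X ^ a * ?P) $ m = (if m < a then 0 else ?P $ (m - a))"
    by (simp add: fps_X_power_mult_nth)
  also have "\<dots> = int (card {S. S \<subseteq> A \<and> \<Sum>S + a = m})"
  proof -
    have "{S. S \<subseteq> A \<and> \<Sum>S + a = m} = (if m < a then {} else {S. S \<subseteq> A \<and> \<Sum>S = m - a})"
      by auto
    thus ?thesis using insert by simp
  qed
  finally show ?case
    using insert by (simp add: card_subsets_with_sum_insert)
qed

definition distinct_parts_product :: "nat \<Rightarrow> int fps" where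
  "distinct_parts_product N = (\<Prod>i=1..N. 1 + fps_X ^ i)"

lemma distinct_parts_product_coeff:
  assumes "t \<le> N"
  shows "distinct_parts_product N $ t = int (card {S. S \<subseteq> {1..t} \<and> \<Sum>S = t})"
proof -
  have "x \<le> t" if "S \<subseteq> {1..N}" "\<Sum>S = t" "x \<in> S" for S x
    using that member_le_sum[of x S id] finite_subset[of S "{1..N}"] by auto
  hence "{S. S \<subseteq> {1..N} \<and> \<Sum>S = t} = {S. S \<subseteq> {1..t} \<and> \<Sum>S = t}"
    using assms by fastforce
  thus ?thesis
    unfolding distinct_parts_product_def by (simp add: prod_one_plus_X_power_coeff)
qed

lemma sum_image_mult:
  fixes d :: nat
  assumes "d \<ge> 1"
  shows "\<Sum>((*) d ` T) = d * \<Sum>T"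
proof -
  have "inj_on ((*) d) T" using assms by (auto simp: inj_on_def)
  thus ?thesis by (simp add: sum.reindex sum_distrib_left)
qed

lemma distinct_partitions_with_Gcd_eq_image:
  fixes d m :: nat
  assumes d: "d \<ge> 1"
  shows "{S. S \<subseteq> {1..d * m} \<and> \<Sum>S = d * m \<and> Gcd S = d} =
    image ((*) d) ` {T. T \<subseteq> {1..m} \<and> \<Sum>T = m \<and> Gcd T = 1}"
proof (intro equalityI subsetI)
  fix S assume "S \<in> {S. S \<subseteq> {1..d * m} \<and> \<Sum>S = d * m \<and> Gcd S = d}"
  hence S: "S \<subseteq> {1..d * m}" "\<Sum>S = d * m" "Gcd S = d" by auto
  define T where "T = (\<lambda>x. x div d) ` S"
  have dvd: "d dvd x" if "x \<in> S" for x using S(3) that by (metis Gcd_dvd)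
  hence ST: "S = (*) d ` T"
    unfolding T_def image_image by simp
  have "T \<subseteq> {1..m}"
  proof
    fix y assume "y \<in> T"
    then obtain x where "x \<in> S" "y = x div d" unfolding T_def by blast
    hence "d * y \<ge> 1" "d * y \<le> d * m" using dvd S(1) by auto
    thus "y \<in> {1..m}" using d by (auto intro: Suc_leI)
  qed
  moreover have "\<Sum>T = m" "Gcd T = 1"
    using S(2,3) d sum_image_mult[OF d, of T] Gcd_mult[of d T] unfolding ST by simp_all
  ultimately show "S \<in> image ((*) d) ` {T. T \<subseteq> {1..m} \<and> \<Sum>T = m \<and> Gcd T = 1}"
    using ST by blast
next
  fix S assume "S \<in> image ((*) d) ` {T. T \<subseteq> {1..m} \<and> \<Sum>T = m \<and> Gcd T = 1}"
  then obtain T where "T \<subseteq> {1..m}" "\<Sum>T = m" "Gcd T = 1" "S = (*) d ` T" by auto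
  then show "S \<in> {S. S \<subseteq> {1..d * m} \<and> \<Sum>S = d * m \<and> Gcd S = d}"
    using d sum_image_mult[OF d, of T] Gcd_mult[of d T] by auto
qed

lemma card_distinct_partitions_with_Gcd:
  fixes d m :: nat
  assumes "d \<ge> 1"
  shows "card {S. S \<subseteq> {1..d * m} \<and> \<Sum>S = d * m \<and> Gcd S = d} = q_psi m"
proof -
  have "inj_on ((*) d) X" for X using assms by (auto intro: inj_onI)
  hence "inj_on (image ((*) d)) {T. T \<subseteq> {1..m} \<and> \<Sum>T = m \<and> Gcd T = 1}"
    by (rule inj_on_image)
  thus ?thesis
    unfolding distinct_partitions_with_Gcd_eq_image[OF assms] q_psi_def by (simp add: card_image)
qed

lemma card_distinct_partitions_eq_sum_q_psi:
  assumes t: "t \<ge> 1"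
  shows "card {S. S \<subseteq> {1..t} \<and> \<Sum>S = t} = (\<Sum>m\<in>{m\<in>{1..t}. m dvd t}. q_psi m)"
proof -
  define D where "D = {m\<in>{1..t}. m dvd t}"
  define B where "B m = {S. S \<subseteq> {1..t} \<and> \<Sum>S = t \<and> Gcd S = t div m}" for m
  have div_div: "t div (t div m) = m" if "m \<in> D" for m
    using that t div_div_eq_right[of m t t] unfolding D_def by simp
  have "{S. S \<subseteq> {1..t} \<and> \<Sum>S = t} \<subseteq> (\<Union>m\<in>D. B m)"
  proof
    fix S assume S: "S \<in> {S. S \<subseteq> {1..t} \<and> \<Sum>S = t}"
    have "Gcd S dvd t" using S dvd_sum[of S "Gcd S" id] by (simp add: Gcd_dvd)
    moreover have "S \<noteq> {}" "0 \<notin> S" using S t by auto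
    hence "Gcd S \<noteq> 0" by (auto simp: Gcd_0_iff)
    ultimately have "t div Gcd S \<in> D" "t div (t div Gcd S) = Gcd S"
      using t unfolding D_def by (auto simp: div_le_dividend intro: Suc_leI)
    hence "S \<in> B (t div Gcd S)" using S unfolding B_def by simp
    thus "S \<in> (\<Union>m\<in>D. B m)" using \<open>t div Gcd S \<in> D\<close> by blast
  qed
  hence "{S. S \<subseteq> {1..t} \<and> \<Sum>S = t} = (\<Union>m\<in>D. B m)"
    unfolding B_def by auto
  moreover have "B m \<inter> B m' = {}" if "m \<in> D" "m' \<in> D" "m \<noteq> m'" for m m'
  proof -
    have "t div m \<noteq> t div m'" using that div_div by metis
    thus ?thesis unfolding B_def by auto
  qed
  moreover have "finite (B m)" for m
    unfolding B_def by (auto intro: finite_subset[of _ "Pow {1..t}"])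
  ultimately have "card {S. S \<subseteq> {1..t} \<and> \<Sum>S = t} = (\<Sum>m\<in>D. card (B m))"
    by (simp add: card_UN_disjoint D_def)
  also have "\<dots> = (\<Sum>m\<in>D. q_psi m)"
  proof (rule sum.cong)
    fix m assume "m \<in> D"
    hence "t = (t div m) * m" "t div m \<ge> 1" using t unfolding D_def by (auto intro: Suc_leI)
    thus "card (B m) = q_psi m"
      using card_distinct_partitions_with_Gcd[of "t div m" m] unfolding B_def by metis
  qed simp
  finally show ?thesis unfolding D_def .
qed

section \<open>The convolution identity\<close>

lemma distinct_parts_product_mult_euler_product:
  "distinct_parts_product N * euler_product 1 N = euler_product 2 N"
proof -
  have "(1 + x^i) * (1 - x^i) = 1 - (x^2)^i" for x :: "int fps" and i
  proof -
    have "(x^2)^i = (x^i)^2" by (metis power_mult mult.commute)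
    thus ?thesis by (simp add: algebra_simps power2_eq_square)
  qed
  thus ?thesis
    unfolding distinct_parts_product_def euler_product_def by (simp add: prod.distrib[symmetric])
qed

lemma Omega_eq_sum_multiples:
  assumes "m \<ge> 1"
  shows "Omega m (int N - int m) = (\<Sum>t\<in>{t\<in>{1..N}. m dvd t}. omega (int (N - t)))"
  unfolding Omega_def
proof (rule sum.reindex_bij_witness[of _ "\<lambda>t. t div m - 1" "\<lambda>j. (j + 1) * m"])
  fix t assume "t \<in> {t\<in>{1..N}. m dvd t}"
  then obtain k where "t = k * m" "k \<ge> 1" "k * m \<le> N"
    using assms by (auto elim!: dvdE intro: Suc_leI simp: mult.commute)
  moreover have "int (k - 1) * int m \<le> int N - int m" if "k \<ge> 1" "k * m \<le> N"
    using that by (simp add: of_nat_diff algebra_simps flip: of_nat_mult of_nat_le_iff)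
  ultimately show "(t div m - 1 + 1) * m = t" "t div m - 1 \<in> {j. int j * int m \<le> int N - int m}"
    using assms by auto
next
  fix j assume "j \<in> {j. int j * int m \<le> int N - int m}"
  hence j: "(j + 1) * m \<le> N" by (simp add: algebra_simps flip: of_nat_mult of_nat_add of_nat_le_iff)
  thus "(j + 1) * m div m - 1 = j" "(j + 1) * m \<in> {t\<in>{1..N}. m dvd t}"
    using assms by auto
  show "omega (int (N - (j + 1) * m)) = omega (int N - int m - int j * int m)"
    using j by (simp add: of_nat_diff algebra_simps)
qed

lemma sum_q_psi_Omega_eq_divisor_convolution:
  "(\<Sum>m=1..n. int (q_psi m) * Omega m (int n - int m)) =
    (\<Sum>t=1..n. int (\<Sum>m\<in>{m\<in>{1..t}. m dvd t}. q_psi m) * omega (int (n - t)))"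
proof -
  have "(\<Sum>m=1..n. int (q_psi m) * Omega m (int n - int m)) =
      (\<Sum>m\<in>{1..n}. \<Sum>t\<in>{t\<in>{1..n}. m dvd t}. int (q_psi m) * omega (int (n - t)))"
    by (simp add: Omega_eq_sum_multiples sum_distrib_left)
  also have "\<dots> = (\<Sum>t\<in>{1..n}. \<Sum>m\<in>{m\<in>{1..n}. m dvd t}. int (q_psi m) * omega (int (n - t)))"
    by (rule sum.swap_restrict) simp_all
  also have "\<dots> = (\<Sum>t=1..n. int (\<Sum>m\<in>{m\<in>{1..t}. m dvd t}. q_psi m) * omega (int (n - t)))"
  proof (rule sum.cong)
    fix t assume "t \<in> {1..n}"
    hence "{m\<in>{1..n}. m dvd t} = {m\<in>{1..t}. m dvd t}" by (auto dest: dvd_imp_le)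
    thus "(\<Sum>m\<in>{m\<in>{1..n}. m dvd t}. int (q_psi m) * omega (int (n - t))) =
        int (\<Sum>m\<in>{m\<in>{1..t}. m dvd t}. q_psi m) * omega (int (n - t))"
      by (simp add: sum_distrib_right)
  qed simp
  finally show ?thesis .
qed

theorem mainTheorem9:
  fixes n :: nat
  assumes "n \<ge> 1"
  shows "(\<Sum>m = 1..n. int (q_psi m) * Omega m (int n - int m)) =
    (if odd n then - omega (int n) else - omega (int n) + omega (int (n div 2)))"
proof -
  let ?Q = "distinct_parts_product n" and ?E = "euler_product 1 n"
  have E: "?E $ k = omega (int k)" if "k \<le> n" for k
    using euler_product_coeff[of 1 k n] that by simp
  have Q: "?Q $ t = int (\<Sum>m\<in>{m\<in>{1..t}. m dvd t}. q_psi m)" if "t \<in> {1..n}" for t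
    using that distinct_parts_product_coeff[of t n] card_distinct_partitions_eq_sum_q_psi[of t] by simp
  have "(\<Sum>m = 1..n. int (q_psi m) * Omega m (int n - int m)) = (\<Sum>t=1..n. ?Q $ t * ?E $ (n - t))"
    unfolding sum_q_psi_Omega_eq_divisor_convolution
    by (rule sum.cong) (use Q E[of "n - _"] in simp_all)
  also have "\<dots> = (?Q * ?E) $ n - ?E $ n"
  proof -
    have "{S. S \<subseteq> {1..0::nat} \<and> \<Sum>S = 0} = {{}}" by auto
    hence "?Q $ 0 = 1" using distinct_parts_product_coeff[of 0 n] by simp
    thus ?thesis by (simp add: fps_mult_nth sum.atLeast_Suc_atMost)
  qed
  also have "?Q * ?E = euler_product 2 n"
    by (rule distinct_parts_product_mult_euler_product)
  finally show ?thesis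
    using euler_product_coeff[of 2 n n] E[of n] assms by auto
qed

end
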